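(* Let $x^k\in\mathbb{R}^n$, let $G_k\in\mathcal{S}_{\ell,\mu}(F,x^k)$, let $x^{k+1}$ be the minimizer of $\min_{x\in\mathbb{R}^n}\max_{c^*\in C}\langle c^*,G_k(x)\rangle$, and let $c_k^*$ be a maximizer of $\max_{c^*\in C}\min_{x\in\mathbb{R}^n}\langle c^*,G_k(x)\rangle$. Then for all $x\in\mathbb{R}^n$: (i) $H_k(x)\preceq_K\tfrac12\|x-x^k\|^2\ell$; (ii) $\langle c_k^*,F(x^{k+1})\rangle+\tfrac12\|x^{k+1}-x\|^2\langle c_k^*,\mu\rangle\le\langle c_k^*,F(x)\rangle+\tfrac12\|x^k-x\|^2\langle c_k^*,\ell\rangle$.
   Context: $K\subset\mathbb{R}^m$ is a closed, convex, pointed cone with nonempty interior; $y\preceq_K y'$ means $y'-y\in K$. $K^*=\{c\in\mathbb{R}^m:\langle c,y\rangle\ge0\ \forall y\in K\}$, and $C\subset\mathbb{R}^m$ is a compact convex set with $0\notin C$ and $\mathrm{cone}(C)=K^*$. $F:\mathbb{R}^n\to\mathbb{R}^m$ is differentiable with Jacobian $JF$. For differentiable $\Phi$: strongly $K$-convex with $\mu\in K$ means $J\Phi(x)(y-x)+\tfrac12\|y-x\|^2\mu\preceq_K\Phi(y)-\Phi(x)$ for all $x,y$; $K$-smooth with $\ell\in K$ means $\Phi(y)-\Phi(x)\preceq_K J\Phi(x)(y-x)+\tfrac12\|y-x\|^2\ell$ for all $x,y$. Surrogate class: for $\ell\in K$, $\mu\in\mathrm{int}(K)$ and $x^k\in\mathbb{R}^n$,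 $\mathcal{S}_{\ell,\mu}(F,x^k)$ is the set of differentiable $G_k:\mathbb{R}^n\to\mathbb{R}^m$ that are strongly $K$-convex with $\mu$ and such that, with $x^{k+1}$ the (unique) minimizer of $x\mapsto\max_{c^*\in C}\langle c^*,G_k(x)\rangle$ and $H_k:=G_k-F+F(x^k)$: (a) $F(x^{k+1})-F(x^k)\preceq_K G_k(x^{k+1})$; (b) $H_k$ is $K$-smooth with $\ell$, $H_k(x^k)=0$ and $JH_k(x^k)=0$. *)

theory Defs
  imports "HOL-Analysis.Analysis"
begin

definition cone_le :: "'m::euclidean_space set \<Rightarrow> 'm \<Rightarrow> 'm \<Rightarrow> bool" where
  "cone_le K y y' \<longleftrightarrow> y' - y \<in> K"

definition dual_cone :: "'m::euclidean_space set \<Rightarrow> 'm set" where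
  "dual_cone K = {c. \<forall>y\<in>K. c \<bullet> y \<ge> 0}"

definition proper_cone :: "'m::euclidean_space set \<Rightarrow> bool" where
  "proper_cone K \<longleftrightarrow> cone K \<and> closed K \<and> convex K \<and> K \<inter> uminus ` K = {0} \<and> interior K \<noteq> {}"

definition strongly_K_convex ::
  "'m::euclidean_space set \<Rightarrow> ('n::euclidean_space \<Rightarrow> 'm) \<Rightarrow> ('n \<Rightarrow> 'n \<Rightarrow> 'm) \<Rightarrow> 'm \<Rightarrow> bool" where
  "strongly_K_convex K \<Phi> \<Phi>' \<mu> \<longleftrightarrow>
     (\<forall>x y. cone_le K (\<Phi>' x (y - x) + ((1/2) * (norm (y - x))\<^sup>2) *\<^sub>R \<mu>) (\<Phi> y - \<Phi> x))"

definition K_smooth ::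
  "'m::euclidean_space set \<Rightarrow> ('n::euclidean_space \<Rightarrow> 'm) \<Rightarrow> ('n \<Rightarrow> 'n \<Rightarrow> 'm) \<Rightarrow> 'm \<Rightarrow> bool" where
  "K_smooth K \<Phi> \<Phi>' ell \<longleftrightarrow>
     (\<forall>x y. cone_le K (\<Phi> y - \<Phi> x) (\<Phi>' x (y - x) + ((1/2) * (norm (y - x))\<^sup>2) *\<^sub>R ell))"

definition scal_max :: "'m::euclidean_space set \<Rightarrow> ('n \<Rightarrow> 'm) \<Rightarrow> 'n \<Rightarrow> real" where
  "scal_max C G x = (SUP c\<in>C. c \<bullet> G x)"

definition is_minimizer :: "('n \<Rightarrow> real) \<Rightarrow> 'n \<Rightarrow> bool" where
  "is_minimizer f z \<longleftrightarrow> (\<forall>x. f z \<le> f x)"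

definition H_of :: "('n \<Rightarrow> 'm::real_vector) \<Rightarrow> ('n \<Rightarrow> 'm) \<Rightarrow> 'n \<Rightarrow> 'n \<Rightarrow> 'm" where
  "H_of G F xk = (\<lambda>x. G x - F x + F xk)"

text \<open>Surrogate class S_{ell,mu}(F, x^k); F' is the Jacobian of F.
  x^{k+1} is the (unique) minimizer of scal_max C G.\<close>
definition surrogate_class ::
  "'m::euclidean_space set \<Rightarrow> 'm set \<Rightarrow> ('n::euclidean_space \<Rightarrow> 'm) \<Rightarrow> ('n \<Rightarrow> 'n \<Rightarrow> 'm)
    \<Rightarrow> 'm \<Rightarrow> 'm \<Rightarrow> 'n \<Rightarrow> ('n \<Rightarrow> 'm) set" where
  "surrogate_class K C F F' ell \<mu> xk = {G. \<exists>G'.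
      (\<forall>x. (G has_derivative G' x) (at x)) \<and>
      strongly_K_convex K G G' \<mu> \<and>
      (\<exists>!z. is_minimizer (scal_max C G) z) \<and>
      (\<forall>z. is_minimizer (scal_max C G) z \<longrightarrow> cone_le K (F z - F xk) (G z)) \<and>
      K_smooth K (H_of G F xk) (\<lambda>x h. G' x h - F' x h) ell \<and>
      H_of G F xk xk = 0 \<and>
      (\<lambda>h. G' xk h - F' xk h) = (\<lambda>h. 0)}"

end

theory Submission
  imports Defs
begin

text \<open>
  Part (i) is K-smoothness of H at x^k, where H and its derivative vanish. For part (ii) the
  key point is that x^{k+1} minimizes the scalarization ck \<bullet> G: by a separation argument
  (the minimax theorem for the convex scalarizations c \<bullet> G, c \<in> C), some c0 \<in> C has
  inf (c0 \<bullet> G) at least the min-max value max_c c \<bullet> G(x^{k+1}), and ck, being a maximin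
  point, does at least as well. Hence the derivative of ck \<bullet> G vanishes at x^{k+1}, and the
  strong convexity of G, the majorization F(x^{k+1}) - F(x^k) \<preceq>_K G(x^{k+1}) and part (i),
  all tested against ck \<in> K^*, add up to the inequality.
\<close>

lemma dual_cone_inner_mono:
  assumes "c \<in> dual_cone K" "cone_le K y y'"
  shows "c \<bullet> y \<le> c \<bullet> y'"
proof -
  have "0 \<le> c \<bullet> (y' - y)"
    using assms unfolding dual_cone_def cone_le_def by blast
  then show ?thesis by (simp add: inner_diff_right)
qed

lemma strongly_K_convex_scalarized:
  assumes "strongly_K_convex K \<Phi> \<Phi>' \<mu>" "c \<in> dual_cone K"
  shows "c \<bullet> \<Phi> x + c \<bullet> \<Phi>' x (y - x) + (1/2) * (norm (y - x))\<^sup>2 * (c \<bullet> \<mu>) \<le> c \<bullet> \<Phi> y"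
proof -
  have "c \<bullet> (\<Phi>' x (y - x) + ((1/2) * (norm (y - x))\<^sup>2) *\<^sub>R \<mu>) \<le> c \<bullet> (\<Phi> y - \<Phi> x)"
    using dual_cone_inner_mono[OF assms(2)] assms(1) unfolding strongly_K_convex_def by blast
  then show ?thesis by (simp add: inner_diff_right inner_add_right)
qed

lemma K_smooth_quadratic_upper_bound:
  assumes "K_smooth K H H' ell" "H x0 = 0" "H' x0 = (\<lambda>h. 0)"
  shows "cone_le K (H x) (((1/2) * (norm (x - x0))\<^sup>2) *\<^sub>R ell)"
proof -
  have "cone_le K (H x - H x0) (H' x0 (x - x0) + ((1/2) * (norm (x - x0))\<^sup>2) *\<^sub>R ell)"
    using assms(1) unfolding K_smooth_def by blast
  then show ?thesis
    using assms(2,3) by simp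
qed

lemma inner_pos_of_interior_dual_cone:
  assumes "c \<in> dual_cone K" "c \<noteq> 0" "\<mu> \<in> interior K"
  shows "0 < c \<bullet> \<mu>"
proof -
  obtain r where r: "r > 0" "ball \<mu> r \<subseteq> K"
    using assms(3) mem_interior by blast
  define z where "z = \<mu> - (r / 2 / norm c) *\<^sub>R c"
  have "z \<in> K"
    using r assms(2) unfolding z_def by (auto simp: dist_norm)
  then have "0 \<le> c \<bullet> z"
    using assms(1) unfolding dual_cone_def by blast
  moreover have "c \<bullet> z = c \<bullet> \<mu> - r / 2 * norm c"
    using assms(2) by (simp add: z_def inner_diff_right dot_square_norm power2_eq_square)
  moreover have "0 < r / 2 * norm c"
    using r(1) assms(2) by simp
  ultimately show ?thesis by linarith
qed

lemma convex_on_if_above_tangents: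
  fixes f :: "'a::real_vector \<Rightarrow> real"
  assumes tangent: "\<And>x w. f w + f' w (x - w) \<le> f x" and lin: "\<And>w. linear (f' w)"
  shows "convex_on UNIV f"
  unfolding convex_on_def
proof (intro conjI convex_UNIV ballI allI impI)
  fix x y :: 'a and u v :: real
  assume uv: "0 \<le> u" "0 \<le> v" "u + v = 1"
  define w where "w = u *\<^sub>R x + v *\<^sub>R y"
  have "u *\<^sub>R (x - w) + v *\<^sub>R (y - w) = w - (u + v) *\<^sub>R w"
    by (simp add: w_def algebra_simps)
  then have "u *\<^sub>R (x - w) + v *\<^sub>R (y - w) = 0"
    using uv(3) by simp
  moreover have "f' w (u *\<^sub>R (x - w) + v *\<^sub>R (y - w)) = u * f' w (x - w) + v * f' w (y - w)"
    by (simp add: linear_add[OF lin] linear_scale[OF lin])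
  ultimately have "u * f' w (x - w) + v * f' w (y - w) = 0"
    using linear_0[OF lin] by simp
  moreover have "u * (f w + f' w (x - w)) + v * (f w + f' w (y - w))
      = (u + v) * f w + (u * f' w (x - w) + v * f' w (y - w))"
    by (simp add: algebra_simps)
  moreover have "u * (f w + f' w (x - w)) \<le> u * f x" "v * (f w + f' w (y - w)) \<le> v * f y"
    using uv tangent by (simp_all add: mult_left_mono)
  ultimately show "f w \<le> u * f x + v * f y"
    using uv(3) by simp
qed

lemma strongly_K_convex_scalarization_convex:
  assumes "strongly_K_convex K G G' \<mu>" "\<mu> \<in> K" "c \<in> dual_cone K"
    and "\<And>x. (G has_derivative G' x) (at x)"
  shows "convex_on UNIV (\<lambda>x. c \<bullet> G x)"
proof (rule convex_on_if_above_tangents)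
  show "c \<bullet> G w + c \<bullet> G' w (x - w) \<le> c \<bullet> G x" for x w
  proof -
    have "0 \<le> c \<bullet> \<mu>"
      using assms(2,3) by (simp add: dual_cone_def)
    then have "0 \<le> (1/2) * (norm (x - w))\<^sup>2 * (c \<bullet> \<mu>)"
      by simp
    then show ?thesis
      using strongly_K_convex_scalarized[OF assms(1,3), of w x] by linarith
  qed
  show "linear (\<lambda>h. c \<bullet> G' w h)" for w
    using has_derivative_linear[OF has_derivative_inner_right[OF assms(4)]] .
qed

lemma bdd_below_if_quadratic_growth:
  fixes f :: "'a::real_normed_vector \<Rightarrow> real"
  assumes growth: "\<And>y. f x0 + L (y - x0) + (1/2) * (norm (y - x0))\<^sup>2 * m \<le> f y"
    and "bounded_linear L" "m > 0"
  shows "bdd_below (range f)"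
proof -
  obtain B where B: "\<And>h. norm (L h) \<le> norm h * B"
    using bounded_linear.bounded[OF assms(2)] by blast
  have "f x0 - B\<^sup>2 / (2 * m) \<le> f y" for y
  proof -
    define t where "t = norm (y - x0)"
    have "- (t * B) \<le> L (y - x0)"
      using B[of "y - x0"] unfolding t_def by auto
    moreover have "- B\<^sup>2 / (2 * m) \<le> - (t * B) + (1/2) * t\<^sup>2 * m"
    proof -
      have "0 \<le> (m * t - B)\<^sup>2" by simp
      then show ?thesis
        using \<open>m > 0\<close> by (simp add: field_simps power2_eq_square)
    qed
    ultimately show ?thesis
      using growth[of y] unfolding t_def by linarith
  qed
  then show ?thesis by (intro bdd_belowI2)
qed

lemma scal_max_attained:
  fixes C :: "'m::euclidean_space set"
  assumes "compact C" "C \<noteq> {}"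
  obtains c where "c \<in> C" "scal_max C G x = c \<bullet> G x" "\<And>c'. c' \<in> C \<Longrightarrow> c' \<bullet> G x \<le> c \<bullet> G x"
proof -
  obtain c where c: "c \<in> C" "\<forall>c'\<in>C. c' \<bullet> G x \<le> c \<bullet> G x"
    using continuous_attains_sup[OF assms, of "\<lambda>c. c \<bullet> G x"] continuous_on_inner
      continuous_on_id continuous_on_const by blast
  moreover have "scal_max C G x = c \<bullet> G x"
    unfolding scal_max_def by (rule cSup_eq_maximum) (use c in auto)
  ultimately show ?thesis using that by blast
qed

lemma mem_closed_convex_if_below_support:
  fixes C :: "'a::euclidean_space set"
  assumes "closed C" "convex C" "\<And>y s. (\<forall>c\<in>C. c \<bullet> y < s) \<Longrightarrow> c0 \<bullet> y \<le> s"
  shows "c0 \<in> C"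
proof (rule ccontr)
  assume "c0 \<notin> C"
  then obtain u d where "u \<bullet> c0 < d" "\<forall>c\<in>C. d < u \<bullet> c"
    using separating_hyperplane_closed_point[OF assms(2,1)] by blast
  moreover have "c0 \<bullet> (- u) \<le> - d"
    using assms(3)[of "- u" "- d"] calculation(2) by (simp add: inner_commute)
  ultimately show False by (simp add: inner_commute)
qed

lemma nonneg_if_dominates_positive_multiples:
  fixes b r :: real
  assumes "\<And>t. 0 < t \<Longrightarrow> b \<le> t * r"
  shows "0 \<le> r" "b \<le> 0"
proof -
  show "0 \<le> r"
  proof (rule ccontr)
    assume "\<not> 0 \<le> r"
    then have "(\<bar>b\<bar> + 1) / - r * r = - (\<bar>b\<bar> + 1)" by simp
    then show False
      using assms[of "(\<bar>b\<bar> + 1) / - r"] \<open>\<not> 0 \<le> r\<close> by (simp add: divide_pos_neg)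
  qed
  show "b \<le> 0"
  proof (rule ccontr)
    assume "\<not> b \<le> 0"
    have "b / (2 * (r + 1)) * r \<le> b / 2"
      using \<open>0 \<le> r\<close> \<open>\<not> b \<le> 0\<close> by (simp add: field_simps)
    moreover have "0 < b / (2 * (r + 1))"
      using \<open>0 \<le> r\<close> \<open>\<not> b \<le> 0\<close> by simp
    ultimately show False
      using assms[of "b / (2 * (r + 1))"] \<open>\<not> b \<le> 0\<close> by linarith
  qed
qed

lemma nonneg_above_support_function_imp_mem:
  fixes C :: "'a::euclidean_space set"
  assumes "compact C" "convex C" "(a, \<alpha>) \<noteq> 0"
    and nonneg: "\<And>y s. \<forall>c\<in>C. c \<bullet> y < s \<Longrightarrow> 0 \<le> a \<bullet> y + \<alpha> * s"
  shows "0 < \<alpha>" "- (1 / \<alpha>) *\<^sub>R a \<in> C"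
proof -
  show "0 < \<alpha>"
  proof (rule ccontr)
    assume "\<not> 0 < \<alpha>"
    then have "\<alpha> = 0"
      using nonneg[of 0 1] by simp
    obtain B where B: "\<And>c. c \<in> C \<Longrightarrow> norm c \<le> B"
      using compact_imp_bounded[OF assms(1)] bounded_iff by blast
    have "c \<bullet> (- a) < B * norm a + 1" if "c \<in> C" for c
      using norm_cauchy_schwarz[of c "- a"] mult_right_mono[OF B[OF that], of "norm a"] by simp
    then have "0 \<le> - (a \<bullet> a)"
      using nonneg[of "- a" "B * norm a + 1"] \<open>\<alpha> = 0\<close> by simp
    then have "a \<bullet> a = 0"
      using inner_ge_zero[of a] by linarith
    then show False
      using assms(3) \<open>\<alpha> = 0\<close> by (simp add: zero_prod_def)
  qed
  show "- (1 / \<alpha>) *\<^sub>R a \<in> C"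
  proof (rule mem_closed_convex_if_below_support[OF compact_imp_closed[OF assms(1)] assms(2)])
    fix y s assume "\<forall>c\<in>C. c \<bullet> y < s"
    then show "- (1 / \<alpha>) *\<^sub>R a \<bullet> y \<le> s"
      using nonneg[of y s] \<open>0 < \<alpha>\<close> by (simp add: field_simps)
  qed
qed

lemma convex_minimax_separation:
  fixes C D :: "'m::euclidean_space set"
  assumes "compact C" "convex C" "convex D" "D \<noteq> {}"
    and dominated: "\<And>d. d \<in> D \<Longrightarrow> \<exists>c\<in>C. p \<le> c \<bullet> d"
  obtains c0 where "c0 \<in> C" "\<And>d. d \<in> D \<Longrightarrow> p \<le> c0 \<bullet> d"
proof -
  txt \<open>Homogenization: separate D \<times> {p} from the open convex cone of pairs lying strictly above
    the support function of C; the separating normal, rescaled, is the sought c0.\<close>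
  define T :: "('m \<times> real) set" where "T = {(y, s). \<forall>c\<in>C. c \<bullet> y < s}"
  have "T = (\<Inter>c\<in>C. {z. (c, -1) \<bullet> z < 0})"
    by (auto simp: T_def)
  then have "convex T"
    by (simp add: convex_INT convex_halfspace_lt)
  have "(0, 1) \<in> T"
    by (simp add: T_def)
  have "(D \<times> {p}) \<inter> T = {}"
    using dominated by (fastforce simp: T_def)
  moreover have "convex (D \<times> {p})" "D \<times> {p} \<noteq> {}" "T \<noteq> {}"
    using assms(3,4) \<open>(0, 1) \<in> T\<close> by (auto intro: convex_Times)
  ultimately obtain ah b where "ah \<noteq> 0" and ah: "\<forall>z\<in>D \<times> {p}. ah \<bullet> z \<le> b" "\<forall>z\<in>T. b \<le> ah \<bullet> z"
    using separating_hyperplane_sets[of "D \<times> {p}" T] \<open>convex T\<close> by blast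
  obtain a \<alpha> where a\<alpha>: "ah = (a, \<alpha>)"
    by fastforce
  have b_le: "b \<le> t * (a \<bullet> y + \<alpha> * s)" if "(y, s) \<in> T" "0 < t" for y s t
  proof -
    have "(t *\<^sub>R y, t * s) \<in> T"
      using that by (auto simp: T_def algebra_simps)
    then show ?thesis
      using ah(2) by (auto simp: a\<alpha> algebra_simps)
  qed
  have "0 \<le> a \<bullet> y + \<alpha> * s" if "\<forall>c\<in>C. c \<bullet> y < s" for y s
  proof -
    have "(y, s) \<in> T"
      using that by (simp add: T_def)
    then show ?thesis
      by (rule nonneg_if_dominates_positive_multiples(1)[OF b_le])
  qed
  note c0 = nonneg_above_support_function_imp_mem[OF assms(1,2) \<open>ah \<noteq> 0\<close>[unfolded a\<alpha>] this]
  have "b \<le> 0"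
    using nonneg_if_dominates_positive_multiples(2) b_le[OF \<open>(0, 1) \<in> T\<close>] by blast
  have "p \<le> - (1 / \<alpha>) *\<^sub>R a \<bullet> d" if "d \<in> D" for d
    using ah(1) that \<open>b \<le> 0\<close> c0(1) by (fastforce simp: a\<alpha> field_simps)
  then show ?thesis
    using that c0(2) by blast
qed

lemma minimax_of_convex_scalarizations:
  fixes C :: "'m::euclidean_space set" and G :: "'n::real_vector \<Rightarrow> 'm"
  assumes "compact C" "convex C" "C \<noteq> {}"
    and convex: "\<And>c. c \<in> C \<Longrightarrow> convex_on UNIV (\<lambda>x. c \<bullet> G x)"
    and "is_minimizer (scal_max C G) z"
  obtains c0 where "c0 \<in> C" "\<And>x. scal_max C G z \<le> c0 \<bullet> G x"
proof -
  define D where "D = {y. \<exists>x. \<forall>c\<in>C. c \<bullet> G x \<le> c \<bullet> y}"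
  have "G x \<in> D" for x
    by (auto simp: D_def)
  have "convex D"
    unfolding convex_def
  proof (intro ballI allI impI)
    fix y1 y2 and u v :: real
    assume "y1 \<in> D" "y2 \<in> D" and uv: "0 \<le> u" "0 \<le> v" "u + v = 1"
    then obtain x1 x2 where x: "\<forall>c\<in>C. c \<bullet> G x1 \<le> c \<bullet> y1" "\<forall>c\<in>C. c \<bullet> G x2 \<le> c \<bullet> y2"
      by (auto simp: D_def)
    have "c \<bullet> G (u *\<^sub>R x1 + v *\<^sub>R x2) \<le> c \<bullet> (u *\<^sub>R y1 + v *\<^sub>R y2)" if "c \<in> C" for c
    proof -
      have "c \<bullet> G (u *\<^sub>R x1 + v *\<^sub>R x2) \<le> u * (c \<bullet> G x1) + v * (c \<bullet> G x2)"
        using convex[OF that] uv unfolding convex_on_def by blast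
      also have "\<dots> \<le> u * (c \<bullet> y1) + v * (c \<bullet> y2)"
        using x that uv by (simp add: add_mono mult_left_mono)
      finally show ?thesis
        by (simp add: inner_add_right)
    qed
    then show "u *\<^sub>R y1 + v *\<^sub>R y2 \<in> D"
      by (auto simp: D_def)
  qed
  moreover have "\<exists>c\<in>C. scal_max C G z \<le> c \<bullet> y" if "y \<in> D" for y
  proof -
    obtain x where x: "\<forall>c\<in>C. c \<bullet> G x \<le> c \<bullet> y"
      using \<open>y \<in> D\<close> by (auto simp: D_def)
    obtain c where c: "c \<in> C" "scal_max C G x = c \<bullet> G x"
      using scal_max_attained[OF assms(1,3)] by metis
    have "scal_max C G z \<le> scal_max C G x"
      using assms(5) by (simp add: is_minimizer_def)
    also have "\<dots> \<le> c \<bullet> y"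
      using x c by simp
    finally show ?thesis
      using c(1) by blast
  qed
  ultimately obtain c0 where "c0 \<in> C" "\<And>y. y \<in> D \<Longrightarrow> scal_max C G z \<le> c0 \<bullet> y"
    using convex_minimax_separation[OF assms(1,2)] \<open>\<And>x. G x \<in> D\<close> by blast
  then show ?thesis
    using that \<open>\<And>x. G x \<in> D\<close> by blast
qed

lemma minimax_minimizer_minimizes_maximin_scalarization:
  fixes C :: "'m::euclidean_space set" and G :: "'n::real_vector \<Rightarrow> 'm"
  assumes "compact C" "convex C"
    and "\<And>c. c \<in> C \<Longrightarrow> convex_on UNIV (\<lambda>x. c \<bullet> G x)"
    and "is_minimizer (scal_max C G) z"
    and "ck \<in> C" "\<forall>c\<in>C. (INF x. c \<bullet> G x) \<le> (INF x. ck \<bullet> G x)"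
    and "bdd_below (range (\<lambda>x. ck \<bullet> G x))"
  shows "is_minimizer (\<lambda>x. ck \<bullet> G x) z"
  unfolding is_minimizer_def
proof
  fix x
  have "C \<noteq> {}"
    using assms(5) by blast
  obtain c0 where "c0 \<in> C" "\<And>x. scal_max C G z \<le> c0 \<bullet> G x"
    using minimax_of_convex_scalarizations[OF assms(1,2) \<open>C \<noteq> {}\<close> assms(3,4)] by blast
  obtain c where "scal_max C G z = c \<bullet> G z" "ck \<bullet> G z \<le> c \<bullet> G z"
    using scal_max_attained[OF assms(1) \<open>C \<noteq> {}\<close>] assms(5) by metis
  then have "ck \<bullet> G z \<le> scal_max C G z"
    by simp
  also have "\<dots> \<le> (INF x. c0 \<bullet> G x)"
    by (rule cINF_greatest) (simp_all add: \<open>\<And>x. scal_max C G z \<le> c0 \<bullet> G x\<close>)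
  also have "\<dots> \<le> (INF x. ck \<bullet> G x)"
    using assms(6) \<open>c0 \<in> C\<close> by blast
  also have "\<dots> \<le> ck \<bullet> G x"
    using assms(7) by (rule cINF_lower) simp
  finally show "ck \<bullet> G z \<le> ck \<bullet> G x" .
qed

lemma scalarized_surrogate_descent:
  assumes "c \<in> dual_cone K" "strongly_K_convex K G G' \<mu>"
    and "(G has_derivative G' z) (at z)" "is_minimizer (\<lambda>x. c \<bullet> G x) z"
    and "cone_le K (F z - F xk) (G z)"
    and "cone_le K (H_of G F xk x) (((1/2) * (norm (x - xk))\<^sup>2) *\<^sub>R ell)"
  shows "c \<bullet> F z + (1/2) * (norm (z - x))\<^sup>2 * (c \<bullet> \<mu>)
           \<le> c \<bullet> F x + (1/2) * (norm (xk - x))\<^sup>2 * (c \<bullet> ell)"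
proof -
  have "(\<lambda>h. c \<bullet> G' z h) = (\<lambda>h. 0)"
    using assms(4) has_derivative_inner_right[OF assms(3)]
    by (intro has_derivative_local_min) (auto simp: is_minimizer_def)
  then have "c \<bullet> G' z (x - z) = 0"
    by (rule fun_cong)
  then have "c \<bullet> G z + (1/2) * (norm (x - z))\<^sup>2 * (c \<bullet> \<mu>) \<le> c \<bullet> G x"
    using strongly_K_convex_scalarized[OF assms(2,1), of z x] by simp
  moreover have "c \<bullet> (F z - F xk) \<le> c \<bullet> G z"
    using dual_cone_inner_mono[OF assms(1,5)] .
  moreover have "c \<bullet> H_of G F xk x \<le> (1/2) * (norm (x - xk))\<^sup>2 * (c \<bullet> ell)"
    using dual_cone_inner_mono[OF assms(1,6)] by simp
  ultimately show ?thesis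
    by (simp add: H_of_def inner_diff_right inner_add_right norm_minus_commute)
qed

theorem lemma3p1:
  fixes K C :: "'m::euclidean_space set"
    and F :: "'n::euclidean_space \<Rightarrow> 'm" and F' :: "'n \<Rightarrow> 'n \<Rightarrow> 'm"
    and ell \<mu> :: 'm and xk xk1 :: 'n and G :: "'n \<Rightarrow> 'm" and ck :: 'm
  assumes "proper_cone K"
    and "compact C" "convex C" "0 \<notin> C" "cone hull C = dual_cone K"
    and "\<And>x. (F has_derivative F' x) (at x)"
    and "ell \<in> K" "\<mu> \<in> interior K"
    and "G \<in> surrogate_class K C F F' ell \<mu> xk"
    and "is_minimizer (scal_max C G) xk1"
    and "ck \<in> C" "\<forall>c\<in>C. (INF x. c \<bullet> G x) \<le> (INF x. ck \<bullet> G x)"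
  shows "\<forall>x. cone_le K (H_of G F xk x) (((1/2) * (norm (x - xk))\<^sup>2) *\<^sub>R ell) \<and>
              ck \<bullet> F xk1 + (1/2) * (norm (xk1 - x))\<^sup>2 * (ck \<bullet> \<mu>)
                \<le> ck \<bullet> F x + (1/2) * (norm (xk - x))\<^sup>2 * (ck \<bullet> ell)"
proof -
  obtain G' where G': "\<And>x. (G has_derivative G' x) (at x)" and convex: "strongly_K_convex K G G' \<mu>"
    and descent: "cone_le K (F xk1 - F xk) (G xk1)"
    and smooth: "K_smooth K (H_of G F xk) (\<lambda>x h. G' x h - F' x h) ell"
    and "H_of G F xk xk = 0" "(\<lambda>h. G' xk h - F' xk h) = (\<lambda>h. 0)"
    using assms(9,10) unfolding surrogate_class_def by blast
  have dual: "c \<in> dual_cone K" if "c \<in> C" for c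
    using hull_inc[OF that, of cone] assms(5) by simp
  have "\<mu> \<in> K"
    using assms(8) interior_subset by blast
  have "0 < ck \<bullet> \<mu>"
    using inner_pos_of_interior_dual_cone[OF dual[OF assms(11)] _ assms(8)] assms(4,11) by blast
  then have "bdd_below (range (\<lambda>x. ck \<bullet> G x))"
    by (rule bdd_below_if_quadratic_growth[OF strongly_K_convex_scalarized[OF convex dual[OF assms(11)]]
          bounded_linear_inner_right_comp[OF has_derivative_bounded_linear[OF G']]])
  then have "is_minimizer (\<lambda>x. ck \<bullet> G x) xk1"
    using minimax_minimizer_minimizes_maximin_scalarization[OF assms(2,3) _ assms(10-12)]
      strongly_K_convex_scalarization_convex[OF convex \<open>\<mu> \<in> K\<close> dual G'] by blast
  moreover have "cone_le K (H_of G F xk x) (((1/2) * (norm (x - xk))\<^sup>2) *\<^sub>R ell)" for x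
    using K_smooth_quadratic_upper_bound[OF smooth] \<open>H_of G F xk xk = 0\<close>
      \<open>(\<lambda>h. G' xk h - F' xk h) = (\<lambda>h. 0)\<close> by blast
  ultimately show ?thesis
    using scalarized_surrogate_descent[OF dual[OF assms(11)] convex G' _ descent] by blast
qed

end
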